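(* Let $\Omega\subset\mathbb{C}^d$ be a $\mathbb{C}$-proper convex open set, $o\in\Omega$, and let $p_n,q_n\in\Omega$ be sequences with $p_n\to\xi^+\in\partial\Omega$, $q_n\to\xi^-\in\partial\Omega\cup\{\infty\}$ and $\liminf_{n,m\to\infty}(p_n|q_m)_o<\infty$. If $\partial\Omega$ is $C^2$ near $\xi^+$, then $\xi^+\neq\xi^-$.
   Context: $\mathbb{C}$-proper: contains no complex affine line. $d_\Omega$ is the Kobayashi distance and $(x|y)_o=\tfrac12\big(d_\Omega(o,x)+d_\Omega(o,y)-d_\Omega(x,y)\big)$ is the Gromov product. *)

theory Defs
  imports "HOL-Analysis.Analysis" "HOL-Library.Liminf_Limsup"
begin

definition C_proper :: "(complex ^ 'd) set \<Rightarrow> bool" where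
  "C_proper \<Omega> \<longleftrightarrow> \<not> (\<exists>a v. v \<noteq> 0 \<and> (\<forall>t::complex. a + t *s v \<in> \<Omega>))"

text \<open>Holomorphic discs: holomorphic maps from the unit disc into the domain
  (holomorphy of a C^d-valued map = holomorphy of every coordinate).\<close>
definition analytic_disc :: "(complex ^ 'd) set \<Rightarrow> (complex \<Rightarrow> complex ^ 'd) \<Rightarrow> bool" where
  "analytic_disc \<Omega> f \<longleftrightarrow>
     (\<forall>i. (\<lambda>z. f z $ i) holomorphic_on ball 0 1) \<and> f ` ball 0 1 \<subseteq> \<Omega>"

definition poincare0 :: "complex \<Rightarrow> real" where
  "poincare0 z = artanh (norm z)"

fun kob_chain :: "(complex ^ 'd) set \<Rightarrow> complex ^ 'd \<Rightarrow> complex ^ 'd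
     \<Rightarrow> ((complex \<Rightarrow> complex ^ 'd) \<times> complex) list \<Rightarrow> bool" where
  "kob_chain \<Omega> x y [] \<longleftrightarrow> False"
| "kob_chain \<Omega> x y [(f, z)] \<longleftrightarrow>
     analytic_disc \<Omega> f \<and> z \<in> ball 0 1 \<and> f 0 = x \<and> f z = y"
| "kob_chain \<Omega> x y ((f, z) # c # cs) \<longleftrightarrow>
     analytic_disc \<Omega> f \<and> z \<in> ball 0 1 \<and> f 0 = x \<and> kob_chain \<Omega> (f z) y (c # cs)"

definition kobayashi_dist :: "(complex ^ 'd) set \<Rightarrow> complex ^ 'd \<Rightarrow> complex ^ 'd \<Rightarrow> real" where
  "kobayashi_dist \<Omega> x y =
     Inf {sum_list (map (\<lambda>(f, z). poincare0 z) L) | L. kob_chain \<Omega> x y L}"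

definition gromov_product :: "(complex ^ 'd) set \<Rightarrow> complex ^ 'd \<Rightarrow> complex ^ 'd \<Rightarrow> complex ^ 'd \<Rightarrow> real" where
  "gromov_product \<Omega> o' x y =
     (kobayashi_dist \<Omega> o' x + kobayashi_dist \<Omega> o' y - kobayashi_dist \<Omega> x y) / 2"

definition C2_on :: "(complex ^ 'd) set \<Rightarrow> (complex ^ 'd \<Rightarrow> real) \<Rightarrow> bool" where
  "C2_on U r \<longleftrightarrow> (\<exists>r' r''.
     (\<forall>x\<in>U. (r has_derivative blinfun_apply (r' x)) (at x)) \<and>
     (\<forall>x\<in>U. (r' has_derivative blinfun_apply (r'' x)) (at x)) \<and>
     continuous_on U r'')"

definition C2_boundary_near :: "(complex ^ 'd) set \<Rightarrow> complex ^ 'd \<Rightarrow> bool" where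
  "C2_boundary_near \<Omega> \<xi> \<longleftrightarrow> (\<exists>U r. open U \<and> \<xi> \<in> U \<and> C2_on U r \<and>
     (\<forall>x\<in>U. \<not> (r has_derivative (\<lambda>_. 0)) (at x)) \<and>
     \<Omega> \<inter> U = {x \<in> U. r x < 0})"

end

theory Submission
  imports Defs "HOL-Complex_Analysis.Complex_Analysis"
begin

text \<open>Suppose both sequences converge to \<open>\<xi>\<close>. For \<open>x \<in> \<Omega>\<close> near \<open>\<xi>\<close> let \<open>b\<close> be a nearest boundary
  point and \<open>t = dist x b\<close>. The supporting half-space of the convex set \<open>\<Omega>\<close> at \<open>b\<close> and the Harnack
  inequality along analytic discs give \<open>d(o, x) \<ge> \<onehalf> log (\<delta> / t)\<close> whenever \<open>ball o \<delta> \<subseteq> \<Omega>\<close>.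
  Since the boundary is \<open>C\<^sup>2\<close> near \<open>\<xi>\<close>, it satisfies a uniform interior ball condition with almost
  parallel inward normals, so two such points \<open>x\<close>, \<open>y\<close> are joined by a chain of three discs inside
  two balls of radius \<open>s = 4 dist b\<^sub>x b\<^sub>y + t\<^sub>x + t\<^sub>y\<close>, whence
  \<open>d(x, y) \<le> \<onehalf> log (2s / t\<^sub>x) + \<onehalf> log (2s / t\<^sub>y) + \<onehalf> log 3\<close>. Thus
  \<open>(x|y)\<^sub>o \<ge> \<onehalf> log (\<delta> / 2s) - 1\<close>, which tends to \<open>\<infinity>\<close> as \<open>x, y \<rightarrow> \<xi>\<close>, contradicting the finite
  \<open>liminf\<close>.\<close>

section \<open>The Harnack inequality on the unit disc\<close>

lemma harnack_cayley_estimate: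
  fixes a h w :: complex
  assumes "w * (1 - h) = a + cnj a * h" "norm h \<le> t" "t < 1" "Re w > 0" "Re a > 0"
  shows "Re a * (1 - t) \<le> Re w * (1 + t)"
proof -
  have e: "Re w * (norm (1 - h))^2 = Re a * (1 - (norm h)^2)"
  proof -
    have "w * (1 - h) * cnj (1 - h) = (a + cnj a * h) * cnj (1 - h)" using assms(1) by simp
    moreover have "(1 - h) * cnj (1 - h) = of_real ((norm (1 - h))^2)"
      by (metis complex_norm_square)
    ultimately have "w * of_real ((norm (1 - h))^2) = (a + cnj a * h) * cnj (1 - h)"
      by (metis mult.assoc)
    hence "Re (w * of_real ((norm (1 - h))^2)) = Re ((a + cnj a * h) * cnj (1 - h))" by simp
    thus ?thesis by (simp add: algebra_simps cmod_def power2_eq_square)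
  qed
  have "norm (1 - h) \<le> 1 + norm h" using norm_triangle_ineq4[of 1 h] by simp
  hence "(norm (1 - h))^2 \<le> (1 + norm h)^2" by (simp add: power_mono)
  hence "Re w * (norm (1 - h))^2 \<le> Re w * (1 + norm h)^2" using assms(4) by simp
  hence "Re a * (1 - norm h) * (1 + norm h) \<le> Re w * (1 + norm h) * (1 + norm h)"
    using e by (simp add: algebra_simps power2_eq_square)
  hence A: "Re a * (1 - norm h) \<le> Re w * (1 + norm h)"
    by (rule mult_right_le_imp_le) (simp add: add_pos_nonneg)
  have "Re a * (1 - t) \<le> Re a * (1 - norm h)" using assms by simp
  also have "\<dots> \<le> Re w * (1 + norm h)" by (rule A)
  also have "\<dots> \<le> Re w * (1 + t)" using assms by simp
  finally show ?thesis .
qed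

text \<open>The Cayley transform \<open>h = (g - g 0) / (g + cnj (g 0))\<close> maps the disc into itself
  and fixes 0, so Schwarz's lemma bounds \<open>norm (h z)\<close> by \<open>norm z\<close>.\<close>

lemma Harnack_inequality_disc:
  assumes hol: "g holomorphic_on ball 0 1" and pos: "\<And>z. norm z < 1 \<Longrightarrow> Re (g z) > 0"
    and z: "norm z < 1"
  shows "Re (g 0) * (1 - norm z) \<le> Re (g z) * (1 + norm z)"
proof -
  define a where "a = g 0"
  have Ra: "Re a > 0" using pos[of 0] by (simp add: a_def)
  define h where "h = (\<lambda>\<zeta>. (g \<zeta> - a) / (g \<zeta> + cnj a))"
  have den: "g \<zeta> + cnj a \<noteq> 0" if "norm \<zeta> < 1" for \<zeta>
  proof -
    have "Re (g \<zeta> + cnj a) > 0" using pos[OF that] Ra by simp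
    thus ?thesis by (metis less_irrefl zero_complex.sel(1))
  qed
  have "h holomorphic_on ball 0 1"
    unfolding h_def using den by (auto intro!: holomorphic_intros hol)
  moreover have "h 0 = 0" by (simp add: h_def a_def)
  moreover have "norm (h \<zeta>) < 1" if "norm \<zeta> < 1" for \<zeta>
  proof -
    have "0 < Re (g \<zeta>) * Re a" using pos[OF that] Ra by simp
    moreover have "(norm (g \<zeta> - a))^2 = (Re (g \<zeta>) - Re a)^2 + (Im (g \<zeta>) - Im a)^2"
      and "(norm (g \<zeta> + cnj a))^2 = (Re (g \<zeta>) + Re a)^2 + (Im (g \<zeta>) - Im a)^2"
      by (simp_all add: cmod_power2)
    ultimately have "(norm (g \<zeta> - a))^2 < (norm (g \<zeta> + cnj a))^2"
      by (simp add: power2_eq_square algebra_simps)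
    hence "norm (g \<zeta> - a) < norm (g \<zeta> + cnj a)"
      by (rule power2_less_imp_less) simp
    thus ?thesis using den[OF that] by (simp add: h_def norm_divide divide_less_eq)
  qed
  ultimately have hz: "norm (h z) \<le> norm z" using Schwarz_Lemma(1) z by blast
  have "g z * (1 - h z) = a + cnj a * h z"
    using den[OF z] by (simp add: h_def field_simps)
  from harnack_cayley_estimate[OF this hz _ pos[OF z] Ra] z show ?thesis by (simp add: a_def)
qed

section \<open>Kobayashi chains\<close>

definition chain_length :: "((complex \<Rightarrow> complex ^ 'd) \<times> complex) list \<Rightarrow> real" where
  "chain_length L = sum_list (map (\<lambda>(f, z). poincare0 z) L)"

lemma chain_length_Cons [simp]: "chain_length ((f, z) # L) = poincare0 z + chain_length L"
  by (simp add: chain_length_def)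

lemma chain_length_Nil [simp]: "chain_length [] = 0"
  by (simp add: chain_length_def)

lemma kobayashi_dist_eq_Inf_chain_length:
  "kobayashi_dist \<Omega> x y = Inf {chain_length L | L. kob_chain \<Omega> x y L}"
  by (simp add: kobayashi_dist_def chain_length_def)

lemma poincare0_nonneg: "norm z < 1 \<Longrightarrow> 0 \<le> poincare0 z"
  unfolding poincare0_def artanh_def by (simp add: field_simps)

lemma kob_chain_length_nonneg: "kob_chain \<Omega> x y L \<Longrightarrow> 0 \<le> chain_length L"
  by (induction \<Omega> x y L rule: kob_chain.induct) (auto intro!: add_nonneg_nonneg poincare0_nonneg)

lemma kobayashi_dist_le_chain_length: "kob_chain \<Omega> x y L \<Longrightarrow> kobayashi_dist \<Omega> x y \<le> chain_length L"
  unfolding kobayashi_dist_eq_Inf_chain_length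
  by (rule cInf_lower) (auto intro: kob_chain_length_nonneg simp: bdd_below_def)

lemma kob_chain_snoc:
  "kob_chain \<Omega> x y L \<Longrightarrow> analytic_disc \<Omega> f \<Longrightarrow> norm z < 1 \<Longrightarrow> f 0 = y
   \<Longrightarrow> kob_chain \<Omega> x (f z) (L @ [(f, z)])"
  by (induction \<Omega> x y L rule: kob_chain.induct) auto

lemma analytic_disc_in_domain: "analytic_disc \<Omega> f \<Longrightarrow> norm z < 1 \<Longrightarrow> f z \<in> \<Omega>"
  by (auto simp: analytic_disc_def image_subset_iff)

lemma kob_chain_in_domain: "kob_chain \<Omega> x y L \<Longrightarrow> x \<in> \<Omega> \<and> y \<in> \<Omega>"
proof (induction \<Omega> x y L rule: kob_chain.induct)
  case (2 \<Omega> x y f z)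
  thus ?case using analytic_disc_in_domain[of \<Omega> f 0] analytic_disc_in_domain[of \<Omega> f z] by auto
next
  case (3 \<Omega> x y f z c cs)
  thus ?case using analytic_disc_in_domain[of \<Omega> f 0] by auto
qed simp

lemma norm_vector_smult_complex: "norm (z *s v) = cmod z * norm (v :: complex ^ 'n)"
  unfolding norm_vec_def by (simp add: norm_mult L2_set_right_distrib)

lemma analytic_disc_affine:
  fixes v :: "complex ^ 'd"
  assumes hol: "g holomorphic_on ball 0 1" and g: "\<And>\<zeta>. norm \<zeta> < 1 \<Longrightarrow> norm (g \<zeta>) < 1"
    and c: "c \<in> \<Omega>" and ball: "ball c (norm v) \<subseteq> \<Omega>"
  shows "analytic_disc \<Omega> (\<lambda>\<zeta>. c + g \<zeta> *s v)"
  unfolding analytic_disc_def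
proof
  show "\<forall>i. (\<lambda>\<zeta>. vec_nth (c + g \<zeta> *s v) i) holomorphic_on ball 0 1"
    using hol by (auto intro!: holomorphic_intros)
  show "(\<lambda>\<zeta>. c + g \<zeta> *s v) ` ball 0 1 \<subseteq> \<Omega>"
  proof clarify
    fix \<zeta> :: complex assume "\<zeta> \<in> ball 0 1"
    hence "norm (g \<zeta>) < 1" using g by simp
    hence "dist c (c + g \<zeta> *s v) < norm v \<or> v = 0"
      by (auto simp: dist_norm norm_vector_smult_complex)
    thus "c + g \<zeta> *s v \<in> \<Omega>" using c ball by auto
  qed
qed

text \<open>If \<open>y = c\<close> then \<open>t = 0\<close> and \<open>1 / t = 0\<close>, so \<open>v = 0\<close> and the disc is constant; likewise
  for \<open>x = c\<close> below.\<close>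

lemma analytic_disc_from_centre:
  assumes ball: "ball c s \<subseteq> \<Omega>" and s: "0 < s" and y: "y \<in> ball c s"
  obtains f z where "analytic_disc \<Omega> f" "norm z < 1" "f 0 = c" "f z = y"
    "poincare0 z = artanh (dist c y / s)"
proof -
  define t where "t = dist c y / s"
  define v where "v = complex_of_real (1 / t) *s (y - c)"
  have t: "0 \<le> t" "t < 1" using s y by (auto simp: t_def)
  have "norm v = dist c y / t"
    unfolding v_def norm_vector_smult_complex norm_of_real
    using t by (simp add: dist_norm norm_minus_commute)
  hence "norm v \<le> s"
    using s by (cases "t = 0") (auto simp: t_def)
  hence "analytic_disc \<Omega> (\<lambda>\<zeta>. c + \<zeta> *s v)"
    using ball s by (intro analytic_disc_affine) auto
  moreover have "c + complex_of_real t *s v = y"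
  proof (cases "t = 0")
    case True
    then show ?thesis using s by (simp add: t_def)
  next
    case False
    then show ?thesis by (simp add: v_def flip: of_real_mult)
  qed
  ultimately show ?thesis
    using that[of "\<lambda>\<zeta>. c + \<zeta> *s v" "of_real t"] t unfolding t_def[symmetric] by (simp add: poincare0_def)
qed

lemma analytic_disc_to_centre:
  assumes ball: "ball c s \<subseteq> \<Omega>" and s: "0 < s" and x: "x \<in> ball c s"
  obtains f z where "analytic_disc \<Omega> f" "norm z < 1" "f 0 = x" "f z = c"
    "poincare0 z = artanh (dist c x / s)"
proof -
  define t where "t = dist c x / s"
  define v where "v = complex_of_real (1 / t) *s (c - x)"
  define \<phi> where "\<phi> = Moebius_function 0 (complex_of_real t)"
  have t: "0 \<le> t" "t < 1" using s x by (auto simp: t_def)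
  have "norm v = dist c x / t"
    unfolding v_def norm_vector_smult_complex norm_of_real
    using t by (simp add: dist_norm)
  hence "norm v \<le> s"
    using s by (cases "t = 0") (auto simp: t_def)
  hence "analytic_disc \<Omega> (\<lambda>\<zeta>. c + \<phi> \<zeta> *s v)"
    using ball s t unfolding \<phi>_def
    by (intro analytic_disc_affine Moebius_function_holomorphic Moebius_function_norm_lt_1) auto
  moreover have "c + \<phi> 0 *s v = x"
  proof (cases "t = 0")
    case True
    then show ?thesis using s by (simp add: t_def \<phi>_def Moebius_function_of_zero)
  next
    case False
    then show ?thesis
      by (simp add: \<phi>_def Moebius_function_of_zero v_def vector_smult_lneg
          flip: of_real_mult)
  qed
  moreover have "c + \<phi> (of_real t) *s v = c"
    by (simp add: \<phi>_def Moebius_function_eq_zero)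
  ultimately show ?thesis
    using that[of "\<lambda>\<zeta>. c + \<phi> \<zeta> *s v" "of_real t"] t unfolding t_def[symmetric] by (simp add: poincare0_def)
qed

lemma kobayashi_dist_le_three_balls:
  assumes "ball c1 s \<subseteq> \<Omega>" "ball c2 s \<subseteq> \<Omega>" "0 < s"
    and "x \<in> ball c1 s" "c2 \<in> ball c1 s" "y \<in> ball c2 s"
  shows "kobayashi_dist \<Omega> x y
    \<le> artanh (dist c1 x / s) + artanh (dist c1 c2 / s) + artanh (dist c2 y / s)"
proof -
  obtain f1 z1 where 1: "analytic_disc \<Omega> f1" "norm z1 < 1" "f1 0 = x" "f1 z1 = c1"
    "poincare0 z1 = artanh (dist c1 x / s)"
    using analytic_disc_to_centre[OF assms(1,3,4)] .
  obtain f2 z2 where 2: "analytic_disc \<Omega> f2" "norm z2 < 1" "f2 0 = c1" "f2 z2 = c2"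
    "poincare0 z2 = artanh (dist c1 c2 / s)"
    using analytic_disc_from_centre[OF assms(1,3,5)] .
  obtain f3 z3 where 3: "analytic_disc \<Omega> f3" "norm z3 < 1" "f3 0 = c2" "f3 z3 = y"
    "poincare0 z3 = artanh (dist c2 y / s)"
    using analytic_disc_from_centre[OF assms(2,3,6)] .
  have "kob_chain \<Omega> x y [(f1, z1), (f2, z2), (f3, z3)]" using 1 2 3 by simp
  from kobayashi_dist_le_chain_length[OF this] show ?thesis using 1 2 3 by simp
qed

lemma kob_chain_exists:
  assumes "open \<Omega>" "connected \<Omega>" "a \<in> \<Omega>" "b \<in> \<Omega>"
  shows "\<exists>L. kob_chain \<Omega> a b L"
proof -
  let ?P = "\<lambda>y. \<exists>L. kob_chain \<Omega> a y L"
  have "?P a"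
    by (rule exI[of _ "[(\<lambda>_. a, 0)]"]) (use assms in \<open>auto simp: analytic_disc_def\<close>)
  then show ?thesis
  proof (rule connected_induction_simple[OF assms(2-4), where P = ?P])
    fix u assume "u \<in> \<Omega>"
    then obtain e where e: "e > 0" "ball u (2 * e) \<subseteq> \<Omega>"
      using assms(1) open_contains_ball[of \<Omega>] by (metis field_sum_of_halves half_gt_zero mult_2)
    show "\<exists>T. openin (top_of_set \<Omega>) T \<and> u \<in> T \<and> (\<forall>x\<in>T. \<forall>y\<in>T. ?P x \<longrightarrow> ?P y)"
    proof (intro exI[of _ "ball u (e/2)"] conjI ballI impI)
      show "openin (top_of_set \<Omega>) (ball u (e/2))"
        using e by (intro open_subset) auto
      show "u \<in> ball u (e/2)" using e by simp
      fix x y assume xy: "x \<in> ball u (e/2)" "y \<in> ball u (e/2)" and "?P x"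
      then obtain L where L: "kob_chain \<Omega> a x L" by blast
      have "ball x e \<subseteq> ball u (2 * e)"
        using xy by (auto simp: ball_subset_ball_iff dist_commute)
      hence bx: "ball x e \<subseteq> \<Omega>" using e(2) by blast
      have "y \<in> ball x e"
        using xy dist_triangle[of x y u] by (auto simp: dist_commute)
      then obtain f z where f: "analytic_disc \<Omega> f" "norm z < 1" "f 0 = x" "f z = y"
        using analytic_disc_from_centre[OF bx e(1)] by metis
      show "?P y" using kob_chain_snoc[OF L f(1-3)] f(4) by auto
    qed
  qed
qed

section \<open>Half-spaces and the Kobayashi distance\<close>

text \<open>On the half-space \<open>{y. inner n y < c}\<close> the function \<open>c - inner n y\<close> is the real part of the
  complex-affine function \<open>c - (\<Sum>i. cnj (n$i) * y$i)\<close>, so it is positive and harmonic along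
  every analytic disc, and Harnack's inequality applies.\<close>

lemma analytic_disc_halfspace_harnack:
  fixes n :: "complex ^ 'd"
  assumes an: "analytic_disc \<Omega> f" and z: "norm z < 1" and sep: "\<forall>y\<in>\<Omega>. inner n y < c"
  shows "(c - inner n (f 0)) * (1 - norm z) \<le> (c - inner n (f z)) * (1 + norm z)"
proof -
  define g where "g = (\<lambda>\<zeta>. complex_of_real c - (\<Sum>i\<in>UNIV. cnj (vec_nth n i) * vec_nth (f \<zeta>) i))"
  have hol: "g holomorphic_on ball 0 1"
    using an unfolding g_def analytic_disc_def by (auto intro!: holomorphic_intros)
  have re: "Re (g \<zeta>) = c - inner n (f \<zeta>)" for \<zeta>
    by (simp add: g_def inner_vec_def inner_complex_def)
  have "Re (g \<zeta>) > 0" if "norm \<zeta> < 1" for \<zeta>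
    using analytic_disc_in_domain[OF an that] sep re by auto
  from Harnack_inequality_disc[OF hol this z] show ?thesis by (simp add: re)
qed

lemma ln_div_le_twice_artanh:
  fixes A B r :: real
  assumes "0 < A" "0 < B" "0 \<le> r" "r < 1" "A * (1 - r) \<le> B * (1 + r)"
  shows "ln (A / B) \<le> 2 * artanh r"
proof -
  have "A / B \<le> (1 + r) / (1 - r)" using assms by (simp add: field_simps)
  hence "ln (A / B) \<le> ln ((1 + r) / (1 - r))" using assms by simp
  thus ?thesis by (simp add: artanh_def)
qed

lemma analytic_disc_halfspace_ln_bound:
  fixes n :: "complex ^ 'd"
  assumes an: "analytic_disc \<Omega> f" and z: "norm z < 1" and sep: "\<forall>y\<in>\<Omega>. inner n y < c"
  shows "ln ((c - inner n (f 0)) / (c - inner n (f z))) \<le> 2 * poincare0 z"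
  unfolding poincare0_def
  using sep analytic_disc_in_domain[OF an] z
  by (intro ln_div_le_twice_artanh analytic_disc_halfspace_harnack[OF an z sep]) auto

lemma kob_chain_halfspace_lower:
  fixes n :: "complex ^ 'd"
  assumes "kob_chain \<Omega> a x L" and "\<forall>y\<in>\<Omega>. inner n y < c"
  shows "ln ((c - inner n a) / (c - inner n x)) \<le> 2 * chain_length L"
  using assms
proof (induction \<Omega> a x L rule: kob_chain.induct)
  case (2 \<Omega> x y f z)
  then show ?case using analytic_disc_halfspace_ln_bound[of \<Omega> f z n c] by auto
next
  case (3 \<Omega> x y f z d ds)
  then have an: "analytic_disc \<Omega> f" and z: "norm z < 1" and x: "f 0 = x"
    and ch: "kob_chain \<Omega> (f z) y (d # ds)" and sep: "\<forall>y\<in>\<Omega>. inner n y < c" by auto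
  have "x \<in> \<Omega>" "f z \<in> \<Omega>" "y \<in> \<Omega>"
    using x analytic_disc_in_domain[OF an] z kob_chain_in_domain[OF ch] by auto
  then have "0 < c - inner n x" "0 < c - inner n (f z)" "0 < c - inner n y"
    using sep by auto
  then have "ln ((c - inner n x) / (c - inner n y))
      = ln ((c - inner n x) / (c - inner n (f z))) + ln ((c - inner n (f z)) / (c - inner n y))"
    by (simp add: ln_div)
  also have "\<dots> \<le> 2 * poincare0 z + 2 * chain_length (d # ds)"
    using analytic_disc_halfspace_ln_bound[OF an z sep] x 3 by (intro add_mono) auto
  finally show ?case by simp
qed simp

lemma kobayashi_dist_halfspace_lower:
  fixes n :: "complex ^ 'd"
  assumes "open \<Omega>" "connected \<Omega>" "a \<in> \<Omega>" "x \<in> \<Omega>" "\<forall>y\<in>\<Omega>. inner n y < c"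
  shows "ln ((c - inner n a) / (c - inner n x)) / 2 \<le> kobayashi_dist \<Omega> a x"
  unfolding kobayashi_dist_eq_Inf_chain_length
proof (rule cInf_greatest)
  show "{chain_length L |L. kob_chain \<Omega> a x L} \<noteq> {}"
    using kob_chain_exists[OF assms(1-4)] by auto
qed (use kob_chain_halfspace_lower[OF _ assms(5)] in fastforce)

section \<open>Supporting half-spaces of convex domains\<close>

lemma open_convex_supporting_unit_normal:
  fixes \<Omega> :: "'a::euclidean_space set"
  assumes "open \<Omega>" "convex \<Omega>" "b \<in> frontier \<Omega>"
  obtains n where "norm n = 1" "\<forall>y\<in>\<Omega>. inner n y < inner n b"
proof -
  have "b \<in> closure \<Omega>" "b \<notin> rel_interior \<Omega>"
    using assms by (auto simp: frontier_def rel_interior_open interior_open)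
  then obtain a where "a \<noteq> 0" "\<And>y. y \<in> rel_interior \<Omega> \<Longrightarrow> a \<bullet> b < a \<bullet> y"
    using supporting_hyperplane_relative_frontier[OF assms(2)] by metis
  then show ?thesis
    using that[of "- (1 / norm a) *\<^sub>R a"] assms(1) by (simp add: rel_interior_open divide_simps)
qed

lemma halfspace_gap_ge_radius:
  fixes n :: "'a::real_inner"
  assumes n: "norm n = 1" and sep: "\<forall>y\<in>\<Omega>. inner n y < inner n b"
    and ball: "ball x r \<subseteq> \<Omega>" and r: "0 < r"
  shows "r \<le> inner n b - inner n x"
proof (rule ccontr)
  assume "\<not> ?thesis"
  moreover have "x \<in> \<Omega>" using ball r by auto
  then have "0 < inner n b - inner n x" using sep by auto
  ultimately have "x + (inner n b - inner n x) *\<^sub>R n \<in> ball x r"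
    using n by (simp add: dist_norm)
  then have "inner n (x + (inner n b - inner n x) *\<^sub>R n) < inner n b" using sep ball by auto
  then show False using n by (simp add: inner_add_right dot_square_norm)
qed

lemma ball_subset_if_frontier_far:
  fixes \<Omega> :: "'a::real_normed_vector set"
  assumes "x \<in> \<Omega>" and far: "\<And>y. y \<in> frontier \<Omega> \<Longrightarrow> r \<le> dist x y"
  shows "ball x r \<subseteq> \<Omega>"
proof (rule ccontr)
  assume out: "\<not> ?thesis"
  then have "0 < r" by (auto simp: ball_empty)
  then have "x \<in> ball x r \<inter> \<Omega>" using assms(1) by simp
  moreover have "ball x r - \<Omega> \<noteq> {}" using out by blast
  ultimately have "ball x r \<inter> frontier \<Omega> \<noteq> {}"
    using connected_Int_frontier[OF connected_ball] by blast
  then show False using far by force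
qed

lemma nearest_frontier_point:
  fixes \<Omega> :: "'a::euclidean_space set"
  assumes "open \<Omega>" "convex \<Omega>" "x \<in> \<Omega>" "\<xi> \<in> frontier \<Omega>"
  obtains b n where "b \<in> frontier \<Omega>" "norm n = 1" "\<forall>y\<in>\<Omega>. inner n y < inner n b"
    "0 < dist x b" "dist x b \<le> dist x \<xi>" "b - x = dist x b *\<^sub>R n"
proof -
  obtain b where b: "b \<in> frontier \<Omega>" and nearest: "\<And>y. y \<in> frontier \<Omega> \<Longrightarrow> dist x b \<le> dist x y"
    using distance_attains_inf[of "frontier \<Omega>" x] assms(4) by auto
  obtain n where n: "norm n = 1" and sep: "\<forall>y\<in>\<Omega>. inner n y < inner n b"
    using open_convex_supporting_unit_normal[OF assms(1,2) b] .
  have "b \<notin> \<Omega>" using b assms(1) by (simp add: frontier_def interior_open)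
  then have pos: "0 < dist x b" using assms(3) by auto
  have "dist x b \<le> inner n (b - x)"
    using halfspace_gap_ge_radius[OF n sep ball_subset_if_frontier_far[OF assms(3) nearest] pos]
    by (simp add: inner_diff_right)
  moreover have "inner n (b - x) \<le> dist x b"
    using norm_cauchy_schwarz[of n "b - x"] n by (simp add: dist_norm norm_minus_commute)
  ultimately have "inner n (b - x) = norm n * norm (b - x)"
    using n by (simp add: dist_norm norm_minus_commute)
  then have "b - x = dist x b *\<^sub>R n"
    using norm_cauchy_schwarz_eq[of n "b - x"] n by (simp add: dist_norm norm_minus_commute)
  then show ?thesis using that b n sep pos nearest[OF assms(4)] by blast
qed

lemma unit_normal_eq_of_interior_ball:
  fixes n \<nu> b :: "'a::real_inner"
  assumes n: "norm n = 1" and nu: "norm \<nu> = 1" and sep: "\<forall>y\<in>\<Omega>. inner n y < inner n b"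
    and ball: "ball (b + s *\<^sub>R \<nu>) s \<subseteq> \<Omega>" and s: "0 < s"
  shows "\<nu> = - n"
proof -
  have "s \<le> inner n b - inner n (b + s *\<^sub>R \<nu>)"
    by (rule halfspace_gap_ge_radius[OF n sep ball s])
  then have "s * 1 \<le> s * (- inner n \<nu>)" by (simp add: inner_add_right)
  then have "inner n \<nu> \<le> -1" using s by (simp only: mult_le_cancel_left_pos)
  moreover have "inner (\<nu> + n) (\<nu> + n) = inner \<nu> \<nu> + 2 * inner n \<nu> + inner n n"
    unfolding inner_add_left inner_add_right by (simp add: inner_commute)
  ultimately have "inner (\<nu> + n) (\<nu> + n) \<le> 0"
    using n nu by (simp add: dot_square_norm)
  then have "inner (\<nu> + n) (\<nu> + n) = 0" using inner_ge_zero[of "\<nu> + n"] by linarith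
  then have "\<nu> + n = 0" by simp
  then show ?thesis by (simp add: eq_neg_iff_add_eq_0)
qed

section \<open>Interior balls at a \<open>C\<^sup>2\<close> boundary\<close>

lemma linear_functional_eq_inner:
  fixes f :: "'a::euclidean_space \<Rightarrow> real"
  assumes "bounded_linear f"
  shows "f v = inner (\<Sum>i\<in>Basis. f i *\<^sub>R i) v"
proof -
  interpret bounded_linear f by fact
  have "f v = f (\<Sum>i\<in>Basis. (v \<bullet> i) *\<^sub>R i)" by (simp add: euclidean_representation)
  also have "\<dots> = (\<Sum>i\<in>Basis. (v \<bullet> i) * f i)" by (simp add: sum scale)
  also have "\<dots> = (\<Sum>i\<in>Basis. inner (f i *\<^sub>R i) v)"
    by (intro sum.cong) (auto simp: inner_commute)
  also have "\<dots> = inner (\<Sum>i\<in>Basis. f i *\<^sub>R i) v" by (simp add: inner_sum_left)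
  finally show ?thesis .
qed

lemma blinfun_lipschitz_of_bounded_derivative:
  fixes r' :: "'a::real_normed_vector \<Rightarrow> 'a \<Rightarrow>\<^sub>L real"
  assumes "convex S" "\<forall>x\<in>S. (r' has_derivative blinfun_apply (r'' x)) (at x)"
    "\<forall>x\<in>S. norm (r'' x) \<le> M" "x \<in> S" "y \<in> S"
  shows "norm (r' x - r' y) \<le> M * norm (x - y)"
  by (rule differentiable_bound[OF assms(1) _ _ assms(4,5)])
     (use assms(2,3) in \<open>auto intro: has_derivative_at_withinI simp: norm_blinfun.rep_eq[symmetric]\<close>)

lemma second_order_upper_bound:
  fixes r :: "'a::real_normed_vector \<Rightarrow> real"
  assumes S: "convex S" and d: "\<forall>x\<in>S. (r has_derivative blinfun_apply (r' x)) (at x)"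
    and L: "\<forall>x\<in>S. \<forall>y\<in>S. norm (r' x - r' y) \<le> M * norm (x - y)"
    and b: "b \<in> S" and z: "z \<in> S" and M: "0 \<le> M"
  shows "r z \<le> r b + r' b (z - b) + M * (norm (z - b))^2"
proof -
  define h where "h = (\<lambda>w. r w - r' b w)"
  define T where "T = closed_segment b z"
  have TS: "T \<subseteq> S" using S b z by (simp add: T_def closed_segment_subset)
  have "(h has_derivative blinfun_apply (r' w - r' b)) (at w within T)" if "w \<in> T" for w
  proof -
    have "(r has_derivative blinfun_apply (r' w)) (at w)" using d TS that by auto
    then have "(h has_derivative (\<lambda>v. r' w v - r' b v)) (at w)"
      unfolding h_def by (auto intro!: derivative_eq_intros)
    moreover have "blinfun_apply (r' w - r' b) = (\<lambda>v. r' w v - r' b v)"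
      by (simp add: fun_eq_iff blinfun.diff_left)
    ultimately show ?thesis by (auto intro: has_derivative_at_withinI)
  qed
  moreover have "onorm (blinfun_apply (r' w - r' b)) \<le> M * norm (z - b)" if "w \<in> T" for w
  proof -
    have "onorm (blinfun_apply (r' w - r' b)) \<le> M * norm (w - b)"
      using L TS that b by (auto simp: norm_blinfun.rep_eq[symmetric])
    also have "\<dots> \<le> M * norm (z - b)"
      using segment_bound1[of w b z] that M by (simp add: T_def mult_left_mono)
    finally show ?thesis .
  qed
  ultimately have "norm (h z - h b) \<le> M * norm (z - b) * norm (z - b)"
    by (intro differentiable_bound[of T h]) (auto simp: T_def)
  then show ?thesis by (simp add: h_def blinfun.diff_right power2_eq_square abs_le_iff)
qed

lemma nonpos_on_closure_of_sublevel:
  fixes r :: "'a::metric_space \<Rightarrow> real"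
  assumes "b \<in> closure \<Omega>" "b \<in> U" "open U" "isCont r b" "\<Omega> \<inter> U = {x \<in> U. r x < 0}"
  shows "r b \<le> 0"
proof (rule ccontr)
  assume "\<not> r b \<le> 0"
  then obtain d where d: "d > 0" "\<And>x. dist x b < d \<Longrightarrow> dist (r x) (r b) < r b"
    using assms(4) unfolding continuous_at_eps_delta by (meson not_le)
  obtain d' where d': "d' > 0" "ball b d' \<subseteq> U" using assms(2,3) open_contains_ball by blast
  obtain y where y: "y \<in> \<Omega>" "dist y b < min d d'"
    using assms(1) d(1) d'(1) unfolding closure_approachable by (metis min_less_iff_conj)
  then have "y \<in> U" using d' by (auto simp: dist_commute)
  then have "r y < 0" using y assms(5) by auto
  moreover have "dist (r y) (r b) < r b" using d y by auto
  ultimately show False by (simp add: dist_real_def)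
qed

lemma C2_on_second_order_bound:
  fixes r :: "complex ^ 'd \<Rightarrow> real"
  assumes "C2_on U r" and R: "cball \<xi> R \<subseteq> U"
  obtains M g where "0 < M" "\<And>x. x \<in> U \<Longrightarrow> (r has_derivative inner (g x)) (at x)"
    "\<And>x. x \<in> U \<Longrightarrow> isCont g x"
    "\<And>b z. b \<in> cball \<xi> R \<Longrightarrow> z \<in> cball \<xi> R
       \<Longrightarrow> r z \<le> r b + inner (g b) (z - b) + M * (norm (z - b))^2"
proof -
  obtain r' r'' where dr: "\<forall>x\<in>U. (r has_derivative blinfun_apply (r' x)) (at x)"
    and dr': "\<forall>x\<in>U. (r' has_derivative blinfun_apply (r'' x)) (at x)"
    and cr'': "continuous_on U r''"
    using assms(1) unfolding C2_on_def by blast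
  have "compact (r'' ` cball \<xi> R)"
    by (rule compact_continuous_image[OF continuous_on_subset[OF cr'' R]]) simp
  then obtain M where "0 < M" "\<forall>y\<in>r'' ` cball \<xi> R. norm y \<le> M"
    using compact_imp_bounded bounded_pos by metis
  then have M: "0 < M" "\<forall>x\<in>cball \<xi> R. norm (r'' x) \<le> M" by auto
  define g where "g x = (\<Sum>i\<in>Basis. r' x i *\<^sub>R i)" for x
  have rep: "blinfun_apply (r' x) = inner (g x)" for x
    unfolding g_def fun_eq_iff
    by (intro allI linear_functional_eq_inner) (rule blinfun.bounded_linear_right)
  have "r z \<le> r b + inner (g b) (z - b) + M * (norm (z - b))^2"
    if "b \<in> cball \<xi> R" "z \<in> cball \<xi> R" for b z
  proof -
    have lip: "\<forall>x\<in>cball \<xi> R. \<forall>y\<in>cball \<xi> R. norm (r' x - r' y) \<le> M * norm (x - y)"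
      using blinfun_lipschitz_of_bounded_derivative[OF convex_cball _ M(2)] dr' R by blast
    have "\<forall>x\<in>cball \<xi> R. (r has_derivative blinfun_apply (r' x)) (at x)"
      using dr R by blast
    from second_order_upper_bound[OF convex_cball this lip that] M(1) show ?thesis
      by (simp add: rep)
  qed
  moreover have "isCont g x" if "x \<in> U" for x
  proof -
    have "isCont r' x" using dr' that has_derivative_continuous by blast
    then show ?thesis unfolding g_def by (intro continuous_intros) auto
  qed
  ultimately show ?thesis using that M(1) dr by (metis rep)
qed

text \<open>Here \<open>r\<close> is the local defining function, \<open>g\<close> its gradient and \<open>M\<close> a bound for its Hessian.\<close>

lemma C2_boundary_local_model:
  fixes \<Omega> :: "(complex ^ 'd) set"
  assumes "C2_boundary_near \<Omega> \<xi>"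
  obtains R M g r where "0 < R" "0 < M" "isCont g \<xi>" "g \<xi> \<noteq> 0"
    "\<And>b z. b \<in> cball \<xi> R \<Longrightarrow> z \<in> cball \<xi> R
       \<Longrightarrow> r z \<le> r b + inner (g b) (z - b) + M * (norm (z - b))^2"
    "\<And>b. b \<in> cball \<xi> R \<Longrightarrow> b \<in> closure \<Omega> \<Longrightarrow> r b \<le> 0"
    "\<And>z. z \<in> cball \<xi> R \<Longrightarrow> z \<in> \<Omega> \<longleftrightarrow> r z < 0"
proof -
  obtain U r where U: "open U" "\<xi> \<in> U" and C2: "C2_on U r"
    and nz: "\<forall>x\<in>U. \<not> (r has_derivative (\<lambda>_. 0)) (at x)" and OU: "\<Omega> \<inter> U = {x \<in> U. r x < 0}"
    using assms unfolding C2_boundary_near_def by blast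
  obtain R where R: "0 < R" "cball \<xi> R \<subseteq> U" using U open_contains_cball by blast
  obtain M g where M: "0 < M" and dr: "\<And>x. x \<in> U \<Longrightarrow> (r has_derivative inner (g x)) (at x)"
    and cg: "\<And>x. x \<in> U \<Longrightarrow> isCont g x"
    and quad: "\<And>b z. b \<in> cball \<xi> R \<Longrightarrow> z \<in> cball \<xi> R
       \<Longrightarrow> r z \<le> r b + inner (g b) (z - b) + M * (norm (z - b))^2"
    using C2_on_second_order_bound[OF C2 R(2)] by metis
  have "g \<xi> \<noteq> 0"
  proof
    assume "g \<xi> = 0"
    then show False using nz dr[OF U(2)] U(2) by (simp add: inner_zero_left[abs_def])
  qed
  moreover have "r b \<le> 0" if "b \<in> cball \<xi> R" "b \<in> closure \<Omega>" for b
  proof -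
    have "b \<in> U" using that R(2) by blast
    then show ?thesis
      using that dr has_derivative_continuous nonpos_on_closure_of_sublevel[OF _ _ U(1) _ OU] by blast
  qed
  moreover have "z \<in> \<Omega> \<longleftrightarrow> r z < 0" if "z \<in> cball \<xi> R" for z
    using that R(2) OU by blast
  ultimately show ?thesis using that[OF R(1) M cg[OF U(2)] _ quad] by blast
qed

text \<open>On the ball, \<open>norm (z - b)\<^sup>2 < 2 s inner \<nu> (z - b)\<close>, so the linear term dominates the
  quadratic one.\<close>

lemma neg_in_tangent_ball_of_quadratic_bound:
  fixes r :: "'a::real_inner \<Rightarrow> real"
  assumes quad: "r z \<le> r b + inner g (z - b) + M * (norm (z - b))^2"
    and rb: "r b \<le> 0" and g: "g = - c *\<^sub>R \<nu>" and \<nu>: "norm \<nu> = 1"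
    and M: "0 < M" "2 * M * s \<le> c" and z: "z \<in> ball (b + s *\<^sub>R \<nu>) s"
  shows "r z < 0"
proof -
  define v where "v = z - b"
  define w where "w = inner \<nu> v"
  have s: "0 < s" using z zero_le_dist[of "b + s *\<^sub>R \<nu>" z] unfolding mem_ball by linarith
  have "norm (v - s *\<^sub>R \<nu>) < s" using z by (simp add: v_def dist_norm norm_minus_commute algebra_simps)
  then have "(norm (v - s *\<^sub>R \<nu>))^2 < s^2" by (simp add: power_strict_mono)
  moreover have "(norm (v - s *\<^sub>R \<nu>))^2 = inner v v - 2 * s * w + s^2 * inner \<nu> \<nu>"
    unfolding power2_norm_eq_inner w_def
    by (simp add: inner_commute algebra_simps power2_eq_square)
  moreover have "inner \<nu> \<nu> = 1" using \<nu> by (simp add: dot_square_norm)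
  ultimately have close: "(norm v)^2 < 2 * s * w" by (simp add: power2_norm_eq_inner)
  then have "0 < 2 * s * w" by (meson le_less_trans zero_le_power2)
  then have w: "0 < w" using s by (simp add: zero_less_mult_iff)
  have "r z \<le> - c * w + M * (norm v)^2"
    using quad rb g by (simp add: v_def w_def)
  also have "\<dots> < - c * w + M * (2 * s * w)"
    using close M(1) by simp
  also have "\<dots> \<le> 0"
    using mult_right_mono[OF M(2) less_imp_le[OF w]] by (simp add: algebra_simps)
  finally show ?thesis .
qed

lemma tangent_ball_subset_of_quadratic_bound:
  fixes r :: "'a::real_inner \<Rightarrow> real"
  assumes quad: "\<And>z. z \<in> cball \<xi> R \<Longrightarrow> r z \<le> r b + inner g (z - b) + M * (norm (z - b))^2"
    and sub: "\<And>z. z \<in> cball \<xi> R \<Longrightarrow> r z < 0 \<Longrightarrow> z \<in> \<Omega>"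
    and rb: "r b \<le> 0" and g: "g = - c *\<^sub>R \<nu>" and \<nu>: "norm \<nu> = 1"
    and M: "0 < M" "2 * M * s \<le> c" and near: "2 * dist \<xi> b < R" "4 * s \<le> R"
  shows "ball (b + s *\<^sub>R \<nu>) s \<subseteq> \<Omega>"
proof
  fix z assume z: "z \<in> ball (b + s *\<^sub>R \<nu>) s"
  then have "dist (b + s *\<^sub>R \<nu>) z < s" by simp
  moreover have "dist b (b + s *\<^sub>R \<nu>) = \<bar>s\<bar>" using \<nu> by (simp add: dist_norm)
  ultimately have "dist b z < 2 * s"
    using dist_triangle[of b z "b + s *\<^sub>R \<nu>"] zero_le_dist[of "b + s *\<^sub>R \<nu>" z] by linarith
  then have "z \<in> cball \<xi> R" using dist_triangle[of \<xi> z b] near by simp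
  then show "z \<in> \<Omega>"
    using sub neg_in_tangent_ball_of_quadratic_bound[OF quad rb g \<nu> M z] by blast
qed

definition uniform_interior_balls ::
    "'a::real_normed_vector set \<Rightarrow> 'a \<Rightarrow> real \<Rightarrow> real \<Rightarrow> ('a \<Rightarrow> 'a) \<Rightarrow> bool" where
  "uniform_interior_balls \<Omega> \<xi> \<eta> \<rho> \<nu> \<longleftrightarrow> 0 < \<rho> \<and>
     (\<forall>b\<in>frontier \<Omega> \<inter> ball \<xi> \<eta>. norm (\<nu> b) = 1 \<and>
        (\<forall>s. 0 < s \<and> s \<le> \<rho> \<longrightarrow> ball (b + s *\<^sub>R \<nu> b) s \<subseteq> \<Omega>)) \<and>
     (\<forall>b\<in>frontier \<Omega> \<inter> ball \<xi> \<eta>. \<forall>b'\<in>frontier \<Omega> \<inter> ball \<xi> \<eta>. norm (\<nu> b - \<nu> b') \<le> 1/4)"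

lemma C2_boundary_uniform_interior_balls:
  fixes \<Omega> :: "(complex ^ 'd) set"
  assumes "C2_boundary_near \<Omega> \<xi>"
  obtains \<eta> \<rho> \<nu> where "0 < \<eta>" "uniform_interior_balls \<Omega> \<xi> \<eta> \<rho> \<nu>"
proof -
  obtain R M g r where R: "0 < R" and M: "0 < M" and cg: "isCont g \<xi>" and g0: "g \<xi> \<noteq> 0"
    and quad: "\<And>b z. b \<in> cball \<xi> R \<Longrightarrow> z \<in> cball \<xi> R
       \<Longrightarrow> r z \<le> r b + inner (g b) (z - b) + M * (norm (z - b))^2"
    and rb: "\<And>b. b \<in> cball \<xi> R \<Longrightarrow> b \<in> closure \<Omega> \<Longrightarrow> r b \<le> 0"
    and \<Omega>r: "\<And>z. z \<in> cball \<xi> R \<Longrightarrow> z \<in> \<Omega> \<longleftrightarrow> r z < 0"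
    using C2_boundary_local_model[OF assms] by metis
  define \<nu> where "\<nu> x = - (1 / norm (g x)) *\<^sub>R g x" for x
  define G where "G = norm (g \<xi>)"
  have G: "0 < G" using g0 by (simp add: G_def)
  have "isCont \<nu> \<xi>" unfolding \<nu>_def using cg g0 by (intro continuous_intros) auto
  then obtain d1 where d1: "0 < d1" "\<And>x. dist x \<xi> < d1 \<Longrightarrow> dist (\<nu> x) (\<nu> \<xi>) < 1/8"
    unfolding continuous_at_eps_delta by (meson zero_less_divide_1_iff zero_less_numeral)
  have "isCont (\<lambda>x. norm (g x)) \<xi>" using cg by (intro continuous_intros)
  moreover have "0 < G/2" using G by simp
  ultimately obtain d2 where d2: "0 < d2" "\<And>x. dist x \<xi> < d2 \<Longrightarrow> dist (norm (g x)) G < G/2"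
    unfolding continuous_at_eps_delta G_def by blast
  define \<eta> where "\<eta> = min (R/2) (min d1 d2)"
  define \<rho> where "\<rho> = min (R/4) (G / (4 * M))"
  have large: "G/2 < norm (g b)" if "b \<in> ball \<xi> \<eta>" for b
  proof -
    have "dist (norm (g b)) G < G/2" using d2(2)[of b] that by (simp add: \<eta>_def dist_commute)
    then show ?thesis unfolding dist_real_def abs_less_iff by linarith
  qed
  have unit: "norm (\<nu> b) = 1" if "b \<in> ball \<xi> \<eta>" for b
  proof -
    have "g b \<noteq> 0" using large[OF that] G by auto
    then show ?thesis by (simp add: \<nu>_def)
  qed
  have "ball (b + s *\<^sub>R \<nu> b) s \<subseteq> \<Omega>" if b: "b \<in> frontier \<Omega> \<inter> ball \<xi> \<eta>" and s: "0 < s" "s \<le> \<rho>"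
    for b s
  proof (rule tangent_ball_subset_of_quadratic_bound[OF quad _ _ _ unit M])
    show near: "2 * dist \<xi> b < R" "4 * s \<le> R" using b s by (auto simp: \<eta>_def \<rho>_def)
    then show "b \<in> cball \<xi> R" using zero_le_dist[of \<xi> b] unfolding mem_cball by linarith
    then show "r b \<le> 0" using rb b by (simp add: frontier_def)
    show "g b = - norm (g b) *\<^sub>R \<nu> b" using large[of b] b G by (simp add: \<nu>_def)
    have "2 * M * s \<le> G/2" using s M by (simp add: \<rho>_def field_simps)
    then show "2 * M * s \<le> norm (g b)" using large[of b] b by simp
  qed (use b \<Omega>r in auto)
  moreover have "norm (\<nu> b - \<nu> b') \<le> 1/4" if "b \<in> ball \<xi> \<eta>" "b' \<in> ball \<xi> \<eta>" for b b'
  proof -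
    have "dist (\<nu> b) (\<nu> \<xi>) < 1/8" "dist (\<nu> b') (\<nu> \<xi>) < 1/8"
      using d1(2)[of b] d1(2)[of b'] that by (auto simp: \<eta>_def dist_commute)
    then have "dist (\<nu> b) (\<nu> b') < 1/4"
      using dist_triangle[of "\<nu> b" "\<nu> b'" "\<nu> \<xi>"] by (simp add: dist_commute)
    then show ?thesis by (simp add: dist_norm)
  qed
  moreover have "0 < \<eta>" "0 < \<rho>" using R d1 d2 G M by (auto simp: \<eta>_def \<rho>_def)
  ultimately show ?thesis using that[of \<eta> \<rho> \<nu>] unit by (auto simp: uniform_interior_balls_def)
qed

section \<open>The Gromov product near a \<open>C\<^sup>2\<close> boundary point\<close>

lemma artanh_mono:
  fixes u v :: real
  assumes "0 \<le> u" "u \<le> v" "v < 1"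
  shows "artanh u \<le> artanh v"
proof -
  have "(1 + u) / (1 - u) \<le> (1 + v) / (1 - v)" using assms by (simp add: field_simps)
  moreover have "0 < (1 + u) / (1 - u)" using assms by simp
  ultimately show ?thesis by (simp add: artanh_def)
qed

lemma artanh_half: "artanh (1/2 :: real) = ln 3 / 2"
  by (simp add: artanh_def)

lemma artanh_one_minus_le:
  fixes s t :: real
  assumes "0 < t" "t \<le> s"
  shows "artanh ((s - t) / s) \<le> ln (2 * s / t) / 2"
proof -
  have "(1 + (s - t) / s) / (1 - (s - t) / s) = (2 * s - t) / t" using assms by (simp add: field_simps)
  then have "artanh ((s - t) / s) = ln ((2 * s - t) / t) / 2" by (simp add: artanh_def)
  also have "\<dots> \<le> ln (2 * s / t) / 2" using assms by (simp add: divide_right_mono)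
  finally show ?thesis .
qed

lemma kobayashi_dist_lower_by_frontier_gap:
  fixes \<Omega> :: "(complex ^ 'd) set"
  assumes "open \<Omega>" "convex \<Omega>" "ball o' \<delta> \<subseteq> \<Omega>" "0 < \<delta>" "x \<in> \<Omega>"
    and n: "norm n = 1" and sep: "\<forall>w\<in>\<Omega>. inner n w < inner n b"
    and bx: "b - x = t *\<^sub>R n" and t: "0 < t"
  shows "ln (\<delta> / t) / 2 \<le> kobayashi_dist \<Omega> o' x"
proof -
  have "inner n b - inner n x = t" using arg_cong[OF bx, of "inner n"] n
    by (simp add: inner_diff_right dot_square_norm)
  moreover have "\<delta> \<le> inner n b - inner n o'" by (rule halfspace_gap_ge_radius[OF n sep assms(3,4)])
  ultimately have "ln (\<delta> / t) \<le> ln ((inner n b - inner n o') / (inner n b - inner n x))"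
    using t assms(4) by (simp add: divide_right_mono)
  also have "\<dots> / 2 \<le> kobayashi_dist \<Omega> o' x"
    using assms(3,4) by (intro kobayashi_dist_halfspace_lower[OF assms(1) convex_connected[OF assms(2)]
        _ assms(5) sep]) auto
  finally show ?thesis by simp
qed

lemma frontier_point_along_interior_normal:
  fixes \<Omega> :: "(complex ^ 'd) set"
  assumes "open \<Omega>" "convex \<Omega>" "ball o' \<delta> \<subseteq> \<Omega>" "0 < \<delta>" "\<xi> \<in> frontier \<Omega>"
    and N: "uniform_interior_balls \<Omega> \<xi> \<eta> \<rho> \<nu>" and x: "x \<in> \<Omega>" "2 * dist x \<xi> < \<eta>"
  obtains b t where "b \<in> frontier \<Omega> \<inter> ball \<xi> \<eta>" "dist b \<xi> \<le> 2 * dist x \<xi>"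
    "0 < t" "t \<le> dist x \<xi>" "x = b + t *\<^sub>R \<nu> b" "ln (\<delta> / t) / 2 \<le> kobayashi_dist \<Omega> o' x"
proof -
  obtain b n where b: "b \<in> frontier \<Omega>" and n: "norm n = 1" and sep: "\<forall>y\<in>\<Omega>. inner n y < inner n b"
    and t: "0 < dist x b" "dist x b \<le> dist x \<xi>" and bx: "b - x = dist x b *\<^sub>R n"
    using nearest_frontier_point[OF assms(1,2) x(1) assms(5)] by blast
  have close: "dist b \<xi> \<le> 2 * dist x \<xi>"
    using dist_triangle[of b \<xi> x] t by (simp add: dist_commute)
  then have bb: "b \<in> frontier \<Omega> \<inter> ball \<xi> \<eta>" using b x(2) by (simp add: dist_commute)
  then have "norm (\<nu> b) = 1" "ball (b + \<rho> *\<^sub>R \<nu> b) \<rho> \<subseteq> \<Omega>" "0 < \<rho>"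
    using N by (auto simp: uniform_interior_balls_def)
  then have "\<nu> b = - n" by (rule unit_normal_eq_of_interior_ball[OF n _ sep])
  then have "x = b + dist x b *\<^sub>R \<nu> b" using bx by (simp add: algebra_simps)
  moreover have "ln (\<delta> / dist x b) / 2 \<le> kobayashi_dist \<Omega> o' x"
    by (rule kobayashi_dist_lower_by_frontier_gap[OF assms(1-4) x(1) n sep bx t(1)])
  ultimately show ?thesis using that bb close t by blast
qed

text \<open>With \<open>s = 4 dist b1 b2 + t1 + t2\<close> both points lie in interior balls of radius \<open>s\<close> whose
  centres are at most \<open>s/2\<close> apart, since the inward normals differ by at most \<open>1/4\<close>.\<close>

lemma kobayashi_dist_le_via_interior_balls:
  fixes \<Omega> :: "(complex ^ 'd) set"
  assumes N: "uniform_interior_balls \<Omega> \<xi> \<eta> \<rho> \<nu>"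
    and b1: "b1 \<in> frontier \<Omega> \<inter> ball \<xi> \<eta>" and b2: "b2 \<in> frontier \<Omega> \<inter> ball \<xi> \<eta>"
    and t: "0 < t1" "0 < t2" and s: "s = 4 * dist b1 b2 + t1 + t2" "s \<le> \<rho>"
  shows "kobayashi_dist \<Omega> (b1 + t1 *\<^sub>R \<nu> b1) (b2 + t2 *\<^sub>R \<nu> b2)
    \<le> ln (2 * s / t1) / 2 + ln (2 * s / t2) / 2 + ln 3 / 2"
proof -
  define c1 where "c1 = b1 + s *\<^sub>R \<nu> b1"
  define c2 where "c2 = b2 + s *\<^sub>R \<nu> b2"
  have spos: "0 < s" and ts: "t1 \<le> s" "t2 \<le> s" using s t zero_le_dist[of b1 b2] by linarith+
  have unit: "norm (\<nu> b1) = 1" "norm (\<nu> b2) = 1" and near: "norm (\<nu> b1 - \<nu> b2) \<le> 1/4"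
    and balls: "ball c1 s \<subseteq> \<Omega>" "ball c2 s \<subseteq> \<Omega>"
    using N b1 b2 spos s(2) by (auto simp: uniform_interior_balls_def c1_def c2_def)
  have d1: "dist c1 (b1 + t1 *\<^sub>R \<nu> b1) = s - t1"
  proof -
    have "c1 - (b1 + t1 *\<^sub>R \<nu> b1) = (s - t1) *\<^sub>R \<nu> b1" by (simp add: c1_def algebra_simps)
    then show ?thesis using unit ts by (simp add: dist_norm)
  qed
  have d2: "dist c2 (b2 + t2 *\<^sub>R \<nu> b2) = s - t2"
  proof -
    have "c2 - (b2 + t2 *\<^sub>R \<nu> b2) = (s - t2) *\<^sub>R \<nu> b2" by (simp add: c2_def algebra_simps)
    then show ?thesis using unit ts by (simp add: dist_norm)
  qed
  have d12: "dist c1 c2 \<le> s / 2"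
  proof -
    have "dist c1 c2 \<le> norm (b1 - b2) + norm (s *\<^sub>R (\<nu> b1 - \<nu> b2))"
      unfolding dist_norm c1_def c2_def
      by (rule order_trans[OF _ norm_triangle_ineq]) (simp add: algebra_simps)
    also have "\<dots> \<le> s / 4 + s * (1/4)"
      using s(1) t spos near by (intro add_mono) (auto simp: dist_norm intro: mult_left_mono)
    finally show ?thesis by simp
  qed
  have "kobayashi_dist \<Omega> (b1 + t1 *\<^sub>R \<nu> b1) (b2 + t2 *\<^sub>R \<nu> b2)
      \<le> artanh ((s - t1) / s) + artanh (dist c1 c2 / s) + artanh ((s - t2) / s)"
    using kobayashi_dist_le_three_balls[OF balls spos, of "b1 + t1 *\<^sub>R \<nu> b1" "b2 + t2 *\<^sub>R \<nu> b2"]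
      d1 d2 d12 t spos by (simp add: dist_commute)
  also have "\<dots> \<le> ln (2 * s / t1) / 2 + ln 3 / 2 + ln (2 * s / t2) / 2"
  proof (intro add_mono artanh_one_minus_le t ts)
    have "artanh (dist c1 c2 / s) \<le> artanh (1/2)"
      using d12 spos by (intro artanh_mono) (auto simp: divide_simps)
    then show "artanh (dist c1 c2 / s) \<le> ln 3 / 2" by (simp add: artanh_half)
  qed
  finally show ?thesis by simp
qed

lemma gromov_product_lower_near_frontier_point:
  fixes \<Omega> :: "(complex ^ 'd) set"
  assumes "open \<Omega>" "convex \<Omega>" "ball o' \<delta> \<subseteq> \<Omega>" "0 < \<delta>" "\<xi> \<in> frontier \<Omega>"
    and N: "uniform_interior_balls \<Omega> \<xi> \<eta> \<rho> \<nu>" and "x \<in> \<Omega>" "y \<in> \<Omega>"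
    and \<epsilon>: "0 < \<epsilon>" "2 * \<epsilon> \<le> \<eta>" "18 * \<epsilon> \<le> \<rho>" and xy: "dist x \<xi> < \<epsilon>" "dist y \<xi> < \<epsilon>"
  shows "ln (\<delta> / (36 * \<epsilon>)) / 2 - 1 \<le> gromov_product \<Omega> o' x y"
proof -
  have "2 * dist x \<xi> < \<eta>" "2 * dist y \<xi> < \<eta>" using xy \<epsilon> by linarith+
  obtain b1 t1 where b1: "b1 \<in> frontier \<Omega> \<inter> ball \<xi> \<eta>" "dist b1 \<xi> \<le> 2 * dist x \<xi>"
    and t1: "0 < t1" "t1 \<le> dist x \<xi>" and x: "x = b1 + t1 *\<^sub>R \<nu> b1"
    and lower1: "ln (\<delta> / t1) / 2 \<le> kobayashi_dist \<Omega> o' x"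
    using frontier_point_along_interior_normal[OF assms(1-6) \<open>x \<in> \<Omega>\<close>] \<open>2 * dist x \<xi> < \<eta>\<close> by metis
  obtain b2 t2 where b2: "b2 \<in> frontier \<Omega> \<inter> ball \<xi> \<eta>" "dist b2 \<xi> \<le> 2 * dist y \<xi>"
    and t2: "0 < t2" "t2 \<le> dist y \<xi>" and y: "y = b2 + t2 *\<^sub>R \<nu> b2"
    and lower2: "ln (\<delta> / t2) / 2 \<le> kobayashi_dist \<Omega> o' y"
    using frontier_point_along_interior_normal[OF assms(1-6) \<open>y \<in> \<Omega>\<close>] \<open>2 * dist y \<xi> < \<eta>\<close> by metis
  define s where "s = 4 * dist b1 b2 + t1 + t2"
  have "dist b1 b2 \<le> dist b1 \<xi> + dist b2 \<xi>"
    using dist_triangle[of b1 b2 \<xi>] by (simp add: dist_commute)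
  then have s_small: "s < 18 * \<epsilon>" using b1 b2 t1 t2 xy by (simp add: s_def)
  have spos: "0 < s" unfolding s_def using t1 t2 zero_le_dist[of b1 b2] by linarith
  have upper: "kobayashi_dist \<Omega> x y \<le> ln (2 * s / t1) / 2 + ln (2 * s / t2) / 2 + ln 3 / 2"
    unfolding x y using s_small \<epsilon>(3)
    by (intro kobayashi_dist_le_via_interior_balls[OF N b1(1) b2(1) t1(1) t2(1) s_def]) simp
  have "ln (\<delta> / t1) - ln (2 * s / t1) = ln (\<delta> / (2 * s))"
    and "ln (\<delta> / t2) - ln (2 * s / t2) = ln (\<delta> / (2 * s))"
    using t1 t2 spos assms(4) by (simp_all add: ln_div)
  then have "ln (\<delta> / (2 * s)) - ln 3 / 2
      \<le> kobayashi_dist \<Omega> o' x + kobayashi_dist \<Omega> o' y - kobayashi_dist \<Omega> x y"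
    using upper lower1 lower2 by linarith
  moreover have "ln (\<delta> / (36 * \<epsilon>)) \<le> ln (\<delta> / (2 * s))"
    using s_small spos assms(4) by (simp add: frac_le)
  moreover have "ln (3::real) \<le> 2" using ln_le_minus_one[of 3] by simp
  ultimately have "ln (\<delta> / (36 * \<epsilon>)) - 2
      \<le> kobayashi_dist \<Omega> o' x + kobayashi_dist \<Omega> o' y - kobayashi_dist \<Omega> x y"
    by linarith
  then show ?thesis unfolding gromov_product_def by (simp add: field_simps)
qed

lemma gromov_product_unbounded_near_C2_point:
  fixes \<Omega> :: "(complex ^ 'd) set"
  assumes "open \<Omega>" "convex \<Omega>" "o' \<in> \<Omega>" "\<xi> \<in> frontier \<Omega>" "C2_boundary_near \<Omega> \<xi>"
  obtains \<epsilon> where "0 < \<epsilon>"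
    "\<And>x y. x \<in> \<Omega> \<Longrightarrow> y \<in> \<Omega> \<Longrightarrow> dist x \<xi> < \<epsilon> \<Longrightarrow> dist y \<xi> < \<epsilon>
       \<Longrightarrow> C \<le> gromov_product \<Omega> o' x y"
proof -
  obtain \<eta> \<rho> \<nu> where \<eta>: "0 < \<eta>" and N: "uniform_interior_balls \<Omega> \<xi> \<eta> \<rho> \<nu>"
    using C2_boundary_uniform_interior_balls[OF assms(5)] by blast
  obtain \<delta> where \<delta>: "0 < \<delta>" "ball o' \<delta> \<subseteq> \<Omega>" using assms(1,3) open_contains_ball by blast
  define \<epsilon> where "\<epsilon> = min (min (\<eta>/2) (\<rho>/18)) (\<delta> / 36 * exp (- (2 * (C + 1))))"
  have \<epsilon>: "0 < \<epsilon>" "2 * \<epsilon> \<le> \<eta>" "18 * \<epsilon> \<le> \<rho>"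
    using \<eta> \<delta> N by (auto simp: \<epsilon>_def uniform_interior_balls_def)
  have "36 * \<epsilon> \<le> \<delta> * exp (- (2 * (C + 1)))" by (simp add: \<epsilon>_def)
  also have "\<dots> = \<delta> / exp (2 * (C + 1))" by (simp only: exp_minus divide_inverse)
  finally have "exp (2 * (C + 1)) \<le> \<delta> / (36 * \<epsilon>)" using \<epsilon>(1) by (simp add: field_simps)
  then have "2 * (C + 1) \<le> ln (\<delta> / (36 * \<epsilon>))" using \<epsilon>(1) \<delta>(1) by (simp add: ln_ge_iff)
  then show ?thesis
    using that[OF \<epsilon>(1)] gromov_product_lower_near_frontier_point[OF assms(1,2) \<delta>(2,1) assms(4) N _ _ \<epsilon>]
    by fastforce
qed

theorem proposition11p3:
  fixes \<Omega> :: "(complex ^ 'd) set"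
    and o' :: "complex ^ 'd"
    and p q :: "nat \<Rightarrow> complex ^ 'd"
    and \<xi>p :: "complex ^ 'd"
    and \<xi>m :: "(complex ^ 'd) option"
  assumes "open \<Omega>" and "convex \<Omega>" and "C_proper \<Omega>"
    and "o' \<in> \<Omega>"
    and "\<forall>n. p n \<in> \<Omega>" and "\<forall>n. q n \<in> \<Omega>"
    and "p \<longlonglongrightarrow> \<xi>p" and "\<xi>p \<in> frontier \<Omega>"
    and "case \<xi>m of
           None \<Rightarrow> filterlim (\<lambda>n. norm (q n)) at_top sequentially
         | Some \<xi> \<Rightarrow> q \<longlonglongrightarrow> \<xi> \<and> \<xi> \<in> frontier \<Omega>"
    and "Liminf (sequentially \<times>\<^sub>F sequentially)
           (\<lambda>(n, m). ereal (gromov_product \<Omega> o' (p n) (q m))) < \<infinity>"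
    and "C2_boundary_near \<Omega> \<xi>p"
  shows "Some \<xi>p \<noteq> \<xi>m"
proof
  assume "Some \<xi>p = \<xi>m"
  then have q: "q \<longlonglongrightarrow> \<xi>p" using assms(9) by auto
  have "ereal C \<le> Liminf (sequentially \<times>\<^sub>F sequentially)
      (\<lambda>(n, m). ereal (gromov_product \<Omega> o' (p n) (q m)))" for C
  proof -
    obtain \<epsilon> where "0 < \<epsilon>" and large: "\<And>x y. x \<in> \<Omega> \<Longrightarrow> y \<in> \<Omega> \<Longrightarrow> dist x \<xi>p < \<epsilon>
        \<Longrightarrow> dist y \<xi>p < \<epsilon> \<Longrightarrow> C \<le> gromov_product \<Omega> o' x y"
      using gromov_product_unbounded_near_C2_point[OF assms(1,2,4,8,11)] by blast
    then have "eventually (\<lambda>n. dist (p n) \<xi>p < \<epsilon>) sequentially"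
      and "eventually (\<lambda>m. dist (q m) \<xi>p < \<epsilon>) sequentially"
      using assms(7) q by (auto simp: tendsto_iff)
    then have "\<forall>\<^sub>F (n, m) in sequentially \<times>\<^sub>F sequentially.
        ereal C \<le> ereal (gromov_product \<Omega> o' (p n) (q m))"
      using large assms(5,6) by (auto elim!: eventually_mono[OF eventually_prodI])
    then show ?thesis by (intro Liminf_bounded) (simp add: case_prod_unfold)
  qed
  then have "Liminf (sequentially \<times>\<^sub>F sequentially)
      (\<lambda>(n, m). ereal (gromov_product \<Omega> o' (p n) (q m))) = \<infinity>"
    by (rule ereal_top)
  with assms(10) show False by simp
qed

end
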